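(* Let $n\ge2$ and let $X$ be a simple directed graph with vertex set $[n]$. Let $p,q\in[n]$ satisfy: - $p\to q\in E(X)$; - $q\to p\notin E(X)$; - $\{p,q\}$ is sink-equivalent in $X$. Then $$\mathrm{ODP}(X,\mathrm{Cycle}_n)_{p\to q}=\frac{n\,x}{n-1}\,\mathrm{ODP}(X-q,\mathrm{Cycle}_{n-1}),$$ where $X-q$ is the induced subgraph of $X$ on $[n]\setminus\{q\}$.
   Context: For $n\ge2$, $\mathrm{Cycle}_n$ is the directed multigraph on $[n]$ with edges $i\to i+1$ ($1\le i\le n-1$) and $n\to1$; for $n=2$ its edges are $1\to2$ and $2\to1$. $\mathrm{Cycle}_1$ is a single vertex with no edges. For a simple directed graph $X$, a set $S\subseteq V(X)$ is sink-equivalent if for every $t\notin S$, either $s\to t\in E(X)$ for all $s\in S$, or $s\to t\notin E(X)$ for all $s\in S$. For directed graphs $X,Y$ with $|V(X)|=|V(Y)|$, $\mathrm{DFS}(X,Y)$ has as vertices the bijections $\sigma:V(X)\to V(Y)$. For each $\sigma$ and ordered pair $(a,b)$ of distinct vertices, it has $m_X(a,b)m_Y(\sigma(a),\sigma(b))$ edges from $\sigma$ to $\sigma\circ(a\,b)$, where $m_X(a,b)$ is the number of edges $a\to b$ in $X$. Thus $\mathrm{outdeg}(\sigma)=\sum_{a\ne b}m_X(a,b)m_Y(\sigma(a),\sigma(b))$ and $\mathrm{ODP}(X,Y)=\sum_\sigma x^{\mathrm{outdeg}(\sigma)}$. $\mathrm{ODP}(X,Y)_{a\to b}$ is the sum of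 $x^{\mathrm{outdeg}(\sigma)}$ over bijections $\sigma$ with $m_Y(\sigma(a),\sigma(b))\ge1$. *)

theory Defs
  imports Main "HOL-Library.FuncSet" "HOL-Computational_Algebra.Polynomial"
begin

definition graph_mult :: "('a \<times> 'a) set \<Rightarrow> 'a \<Rightarrow> 'a \<Rightarrow> nat" where
  "graph_mult E a b = (if (a, b) \<in> E then 1 else 0)"

definition cycle_mult :: "nat \<Rightarrow> nat \<Rightarrow> nat \<Rightarrow> nat" where
  "cycle_mult n i j =
     (if 2 \<le> n \<and> i \<in> {1..n} \<and> j \<in> {1..n} \<and> (j = i + 1 \<or> (i = n \<and> j = 1)) then 1 else 0)"

definition sink_equivalent :: "'a set \<Rightarrow> ('a \<times> 'a) set \<Rightarrow> 'a set \<Rightarrow> bool" where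
  "sink_equivalent V E S \<longleftrightarrow> S \<subseteq> V \<and>
     (\<forall>t \<in> V - S. (\<forall>s \<in> S. (s, t) \<in> E) \<or> (\<forall>s \<in> S. (s, t) \<notin> E))"

text \<open>Bijections V -> W (as extensional functions, so that distinct bijections are distinct).\<close>

definition bijs :: "'a set \<Rightarrow> 'b set \<Rightarrow> ('a \<Rightarrow> 'b) set" where
  "bijs V W = {\<sigma>. bij_betw \<sigma> V W \<and> \<sigma> \<in> extensional V}"

definition outdeg :: "'a set \<Rightarrow> ('a \<Rightarrow> 'a \<Rightarrow> nat) \<Rightarrow> ('b \<Rightarrow> 'b \<Rightarrow> nat) \<Rightarrow> ('a \<Rightarrow> 'b) \<Rightarrow> nat" where
  "outdeg V mX mY \<sigma> = (\<Sum>(a, b) \<in> {(a, b). a \<in> V \<and> b \<in> V \<and> a \<noteq> b}. mX a b * mY (\<sigma> a) (\<sigma> b))"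

definition ODP :: "'a set \<Rightarrow> 'b set \<Rightarrow> ('a \<Rightarrow> 'a \<Rightarrow> nat) \<Rightarrow> ('b \<Rightarrow> 'b \<Rightarrow> nat) \<Rightarrow> rat poly" where
  "ODP V W mX mY = (\<Sum>\<sigma> \<in> bijs V W. monom 1 (outdeg V mX mY \<sigma>))"

definition ODP_edge :: "'a set \<Rightarrow> 'b set \<Rightarrow> ('a \<Rightarrow> 'a \<Rightarrow> nat) \<Rightarrow> ('b \<Rightarrow> 'b \<Rightarrow> nat) \<Rightarrow> 'a \<Rightarrow> 'a \<Rightarrow> rat poly" where
  "ODP_edge V W mX mY a b =
     (\<Sum>\<sigma> \<in> {\<sigma> \<in> bijs V W. mY (\<sigma> a) (\<sigma> b) \<ge> 1}. monom 1 (outdeg V mX mY \<sigma>))"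

end

theory Submission
  imports Defs
begin

text \<open>Composing a bijection with the rotation \<open>i \<mapsto> i + 1 (mod n)\<close> of the cycle preserves its
  out-degree and permutes the bijections, so in both polynomials every label of a fixed vertex
  contributes equally: \<open>ODP(X, Cycle n)\<close> restricted to \<open>p \<rightarrow> q\<close> is \<open>n\<close> times the sum over the
  bijections with \<open>\<sigma> q = n\<close>, hence \<open>\<sigma> p = n - 1\<close>, and \<open>ODP(X - q, Cycle (n - 1))\<close> is \<open>n - 1\<close>
  times the sum over those with \<open>\<tau> p = n - 1\<close>. Restriction to \<open>[n] - {q}\<close> matches these two
  families bijectively and lowers the out-degree by exactly one: the edge \<open>p \<rightarrow> q\<close> is lost,
  while an edge \<open>q \<rightarrow> b\<close> sent to \<open>n \<rightarrow> 1\<close> is traded for \<open>p \<rightarrow> b\<close> sent to \<open>n - 1 \<rightarrow> 1\<close>, which is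
  an edge of \<open>X - q\<close> by sink-equivalence.\<close>

definition cycle_succ :: "nat \<Rightarrow> nat \<Rightarrow> nat" where
  "cycle_succ m i = (if i = m then 1 else i + 1)"

lemma cycle_succ_in: "i \<in> {1..m} \<Longrightarrow> cycle_succ m i \<in> {1..m}"
  by (auto simp: cycle_succ_def)

lemma inj_on_cycle_succ: "inj_on (cycle_succ m) {1..m}"
  by (auto simp: inj_on_def cycle_succ_def split: if_splits)

lemma bij_betw_cycle_succ: "bij_betw (cycle_succ m) {1..m} {1..m}"
proof -
  have "cycle_succ m ` {1..m} \<subseteq> {1..m}" using cycle_succ_in by blast
  then show ?thesis
    using endo_inj_surj[OF finite_atLeastAtMost _ inj_on_cycle_succ] inj_on_cycle_succ
    by (simp add: bij_betw_def)
qed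

lemma cycle_mult_cycle_succ:
  "i \<in> {1..m} \<Longrightarrow> j \<in> {1..m} \<Longrightarrow> cycle_mult m (cycle_succ m i) (cycle_succ m j) = cycle_mult m i j"
  by (auto simp: cycle_succ_def cycle_mult_def)

lemma cycle_mult_eq_1_iff:
  "cycle_mult m i j = 1 \<longleftrightarrow> 2 \<le> m \<and> i \<in> {1..m} \<and> j = cycle_succ m i"
  by (auto simp: cycle_mult_def cycle_succ_def)

lemma cycle_mult_into_last:
  "2 \<le> n \<Longrightarrow> i \<in> {1..n} \<Longrightarrow> 1 \<le> cycle_mult n i n \<longleftrightarrow> i = n - 1"
  by (auto simp: cycle_mult_def)

lemma sum_eq_mult_fibre_sum:
  fixes f :: "'a \<Rightarrow> 'b::comm_semiring_1"
  assumes "finite S" and g: "g ` S \<subseteq> {1..m}"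
    and h: "h ` S \<subseteq> S" "inj_on h S"
    and gh: "\<And>x. x \<in> S \<Longrightarrow> g (h x) = cycle_succ m (g x)"
    and fh: "\<And>x. x \<in> S \<Longrightarrow> f (h x) = f x"
  shows "sum f S = of_nat m * sum f {x \<in> S. g x = m}"
proof -
  let ?F = "\<lambda>i. {x \<in> S. g x = i}"
  have hS: "h ` S = S" using endo_inj_surj[OF \<open>finite S\<close> h] .
  have fibre_succ: "sum f (?F (cycle_succ m i)) = sum f (?F i)" if i: "i \<in> {1..m}" for i
  proof -
    have image_fibre: "h ` ?F i = ?F (cycle_succ m i)"
    proof
      show "h ` ?F i \<subseteq> ?F (cycle_succ m i)"
      proof (rule image_subsetI)
        fix x assume "x \<in> ?F i"
        then show "h x \<in> ?F (cycle_succ m i)" using h(1) gh[of x] by blast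
      qed
      show "?F (cycle_succ m i) \<subseteq> h ` ?F i"
      proof
        fix y assume y: "y \<in> ?F (cycle_succ m i)"
        then obtain x where x: "x \<in> S" "y = h x" using hS by blast
        have "cycle_succ m (g x) = cycle_succ m i" using x y gh by auto
        moreover have "g x \<in> {1..m}" using g x(1) by blast
        ultimately have "g x = i" using inj_onD[OF inj_on_cycle_succ] i by blast
        then show "y \<in> h ` ?F i" using x by blast
      qed
    qed
    have "inj_on h (?F i)" using h(2) by (rule inj_on_subset) blast
    then have "sum f (h ` ?F i) = sum (f \<circ> h) (?F i)" by (rule sum.reindex)
    then have "sum f (?F (cycle_succ m i)) = sum (f \<circ> h) (?F i)" by (simp only: image_fibre)
    also have "\<dots> = sum f (?F i)" using fh by (intro sum.cong) auto
    finally show ?thesis .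
  qed
  have fibre_last: "sum f (?F i) = sum f (?F m)" if "i \<in> {1..m}" for i
  proof -
    have "i \<le> m" using that by simp
    then show ?thesis
    proof (induction rule: inc_induct)
      case (step k)
      then have "cycle_succ m k = Suc k" by (simp add: cycle_succ_def)
      then show ?case using fibre_succ[of k] step that by auto
    qed simp
  qed
  have "sum f S = (\<Sum>i\<in>{1..m}. sum f (?F i))"
    using sum.group[OF \<open>finite S\<close> finite_atLeastAtMost g, of f] by simp
  also have "\<dots> = (\<Sum>i\<in>{1..m}. sum f (?F m))" by (rule sum.cong[OF refl fibre_last])
  also have "\<dots> = of_nat m * sum f (?F m)" by simp
  finally show ?thesis .
qed

lemma finite_bijs: "finite V \<Longrightarrow> finite W \<Longrightarrow> finite (bijs V W)"
  by (rule finite_subset[of _ "PiE V (\<lambda>_. W)"])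
    (auto simp: bijs_def bij_betw_def PiE_iff finite_PiE extensional_def)

lemma bijs_into: "\<sigma> \<in> bijs V W \<Longrightarrow> x \<in> V \<Longrightarrow> \<sigma> x \<in> W"
  by (auto simp: bijs_def bij_betw_def)

lemma bij_betw_restrict_bijs:
  assumes "q \<in> V" "w \<in> W"
  shows "bij_betw (\<lambda>\<sigma>. restrict \<sigma> (V - {q})) {\<sigma> \<in> bijs V W. \<sigma> q = w} (bijs (V - {q}) (W - {w}))"
proof (rule bij_betw_byWitness[where f' = "\<lambda>\<tau>. restrict (\<tau>(q := w)) V"])
  show "\<forall>\<sigma> \<in> {\<sigma> \<in> bijs V W. \<sigma> q = w}. restrict ((restrict \<sigma> (V - {q}))(q := w)) V = \<sigma>"
    using assms(1) by (auto simp: bijs_def extensional_def fun_eq_iff)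
  show "\<forall>\<tau> \<in> bijs (V - {q}) (W - {w}). restrict (restrict (\<tau>(q := w)) V) (V - {q}) = \<tau>"
    by (auto simp: bijs_def extensional_def fun_eq_iff)
  show "(\<lambda>\<sigma>. restrict \<sigma> (V - {q})) ` {\<sigma> \<in> bijs V W. \<sigma> q = w} \<subseteq> bijs (V - {q}) (W - {w})"
  proof (rule image_subsetI)
    fix \<sigma> assume "\<sigma> \<in> {\<sigma> \<in> bijs V W. \<sigma> q = w}"
    then have "bij_betw \<sigma> V W" "\<sigma> q = w" by (auto simp: bijs_def)
    moreover have "bij_betw \<sigma> {q} {w}" using \<open>\<sigma> q = w\<close> by (simp add: bij_betw_def)
    ultimately have "bij_betw \<sigma> (V - {q}) (W - {w})"
      using assms by (intro bij_betw_DiffI) auto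
    then show "restrict \<sigma> (V - {q}) \<in> bijs (V - {q}) (W - {w})"
      by (simp add: bijs_def bij_betw_cong[of "V - {q}" "restrict \<sigma> (V - {q})" \<sigma>])
  qed
  show "(\<lambda>\<tau>. restrict (\<tau>(q := w)) V) ` bijs (V - {q}) (W - {w}) \<subseteq> {\<sigma> \<in> bijs V W. \<sigma> q = w}"
  proof (rule image_subsetI)
    fix \<tau> assume "\<tau> \<in> bijs (V - {q}) (W - {w})"
    then have "bij_betw (\<tau>(q := w)) (V - {q}) (W - {w})"
      by (subst bij_betw_cong[of "V - {q}" _ \<tau>]) (auto simp: bijs_def)
    then have "bij_betw (\<tau>(q := w)) (V - {q} \<union> {q}) (W - {w} \<union> {w})"
      using notIn_Un_bij_betw3[of q "V - {q}" "\<tau>(q := w)" "W - {w}"] by simp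
    then have "bij_betw (\<tau>(q := w)) V W" using assms by (simp add: insert_absorb)
    then show "restrict (\<tau>(q := w)) V \<in> {\<sigma> \<in> bijs V W. \<sigma> q = w}"
      using assms(1) by (simp add: bijs_def bij_betw_cong[of V "restrict (\<tau>(q := w)) V"])
  qed
qed

definition cycle_rotate :: "nat \<Rightarrow> 'a set \<Rightarrow> ('a \<Rightarrow> nat) \<Rightarrow> 'a \<Rightarrow> nat" where
  "cycle_rotate m V \<sigma> = restrict (cycle_succ m \<circ> \<sigma>) V"

lemma cycle_rotate_bijs:
  assumes "\<sigma> \<in> bijs V {1..m}"
  shows "cycle_rotate m V \<sigma> \<in> bijs V {1..m}"
proof -
  have "bij_betw (cycle_succ m \<circ> \<sigma>) V {1..m}"
    using assms bij_betw_trans[OF _ bij_betw_cycle_succ] unfolding bijs_def by blast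
  then show ?thesis
    by (simp add: bijs_def cycle_rotate_def bij_betw_cong[of V "restrict _ V" "cycle_succ m \<circ> \<sigma>"])
qed

lemma inj_on_cycle_rotate: "inj_on (cycle_rotate m V) (bijs V {1..m})"
proof (rule inj_onI)
  fix \<sigma> \<tau> assume \<sigma>: "\<sigma> \<in> bijs V {1..m}" and \<tau>: "\<tau> \<in> bijs V {1..m}"
    and eq: "cycle_rotate m V \<sigma> = cycle_rotate m V \<tau>"
  show "\<sigma> = \<tau>"
  proof (rule extensionalityI)
    show "\<sigma> \<in> extensional V" "\<tau> \<in> extensional V" using \<sigma> \<tau> by (auto simp: bijs_def)
    fix x assume x: "x \<in> V"
    then have "cycle_succ m (\<sigma> x) = cycle_succ m (\<tau> x)"
      using fun_cong[OF eq, of x] by (simp add: cycle_rotate_def)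
    then show "\<sigma> x = \<tau> x"
      using inj_onD[OF inj_on_cycle_succ] bijs_into[OF \<sigma> x] bijs_into[OF \<tau> x] by blast
  qed
qed

lemma cycle_mult_cycle_rotate:
  assumes "\<sigma> \<in> bijs V {1..m}" "a \<in> V" "b \<in> V"
  shows "cycle_mult m (cycle_rotate m V \<sigma> a) (cycle_rotate m V \<sigma> b) = cycle_mult m (\<sigma> a) (\<sigma> b)"
  using assms cycle_mult_cycle_succ[OF bijs_into bijs_into] by (simp add: cycle_rotate_def)

lemma outdeg_cycle_rotate:
  assumes "\<sigma> \<in> bijs V {1..m}"
  shows "outdeg V mX (cycle_mult m) (cycle_rotate m V \<sigma>) = outdeg V mX (cycle_mult m) \<sigma>"
  unfolding outdeg_def using cycle_mult_cycle_rotate[OF assms] by (intro sum.cong) auto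

lemma sum_bijs_eq_mult_fibre_sum:
  fixes f :: "('a \<Rightarrow> nat) \<Rightarrow> 'b::comm_semiring_1"
  assumes "finite V" "a \<in> V"
    and P: "\<And>\<sigma>. \<sigma> \<in> bijs V {1..m} \<Longrightarrow> P \<sigma> \<Longrightarrow> P (cycle_rotate m V \<sigma>)"
    and f: "\<And>\<sigma>. \<sigma> \<in> bijs V {1..m} \<Longrightarrow> f (cycle_rotate m V \<sigma>) = f \<sigma>"
  shows "sum f {\<sigma> \<in> bijs V {1..m}. P \<sigma>} = of_nat m * sum f {\<sigma> \<in> bijs V {1..m}. P \<sigma> \<and> \<sigma> a = m}"
proof -
  let ?S = "{\<sigma> \<in> bijs V {1..m}. P \<sigma>}"
  have "finite ?S" using finite_bijs[OF \<open>finite V\<close>, of "{1..m}"] by simp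
  then have "sum f ?S = of_nat m * sum f {\<sigma> \<in> ?S. \<sigma> a = m}"
  proof (rule sum_eq_mult_fibre_sum[where g = "\<lambda>\<sigma>. \<sigma> a" and h = "cycle_rotate m V"])
    show "(\<lambda>\<sigma>. \<sigma> a) ` ?S \<subseteq> {1..m}" using bijs_into[OF _ \<open>a \<in> V\<close>] by auto
    show "cycle_rotate m V ` ?S \<subseteq> ?S" using cycle_rotate_bijs P by auto
    show "inj_on (cycle_rotate m V) ?S" using inj_on_cycle_rotate by (rule inj_on_subset) blast
    show "cycle_rotate m V \<sigma> a = cycle_succ m (\<sigma> a)" for \<sigma>
      using \<open>a \<in> V\<close> by (simp add: cycle_rotate_def)
    show "f (cycle_rotate m V \<sigma>) = f \<sigma>" if "\<sigma> \<in> ?S" for \<sigma>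
      using f that by blast
  qed
  then show ?thesis by (simp add: conj_assoc)
qed

lemma ODP_eq_mult_fibre_sum:
  assumes "finite V" "a \<in> V"
  shows "ODP V {1..m} mX (cycle_mult m) =
    of_nat m * (\<Sum>\<sigma> \<in> {\<sigma> \<in> bijs V {1..m}. \<sigma> a = m}. monom 1 (outdeg V mX (cycle_mult m) \<sigma>))"
proof -
  have "(\<Sum>\<sigma> \<in> {\<sigma> \<in> bijs V {1..m}. True}. monom 1 (outdeg V mX (cycle_mult m) \<sigma>)) =
    of_nat m * (\<Sum>\<sigma> \<in> {\<sigma> \<in> bijs V {1..m}. True \<and> \<sigma> a = m}. monom 1 (outdeg V mX (cycle_mult m) \<sigma>))"
    by (rule sum_bijs_eq_mult_fibre_sum) (use assms in \<open>simp_all add: outdeg_cycle_rotate\<close>)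
  then show ?thesis by (simp add: ODP_def)
qed

lemma ODP_edge_eq_mult_fibre_sum:
  assumes "finite V" "a \<in> V" "b \<in> V"
  shows "ODP_edge V {1..m} mX (cycle_mult m) a b =
    of_nat m * (\<Sum>\<sigma> \<in> {\<sigma> \<in> bijs V {1..m}. 1 \<le> cycle_mult m (\<sigma> a) (\<sigma> b) \<and> \<sigma> b = m}.
      monom 1 (outdeg V mX (cycle_mult m) \<sigma>))"
  unfolding ODP_edge_def
  by (rule sum_bijs_eq_mult_fibre_sum)
    (use assms in \<open>simp_all add: cycle_mult_cycle_rotate outdeg_cycle_rotate\<close>)

lemma outdeg_graph_mult_eq_card:
  assumes "finite V" and "\<And>i j. mY i j \<le> 1"
  shows "outdeg V (graph_mult E) mY \<sigma> =
    card {(a, b) \<in> E. a \<in> V \<and> b \<in> V \<and> a \<noteq> b \<and> mY (\<sigma> a) (\<sigma> b) = 1}"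
proof -
  let ?D = "{(a, b). a \<in> V \<and> b \<in> V \<and> a \<noteq> b}"
  let ?Q = "\<lambda>(a, b). (a, b) \<in> E \<and> mY (\<sigma> a) (\<sigma> b) = 1"
  have "finite ?D" by (rule finite_subset[of _ "V \<times> V"]) (use assms(1) in auto)
  have "outdeg V (graph_mult E) mY \<sigma> = (\<Sum>x\<in>?D. if ?Q x then 1 else 0)"
    unfolding outdeg_def using assms(2) le_Suc_eq
    by (intro sum.cong) (auto simp: graph_mult_def split: prod.splits)
  also have "\<dots> = card {x \<in> ?D. ?Q x}"
    using sum.inter_filter[OF \<open>finite ?D\<close>, of "\<lambda>_. 1::nat" ?Q] by simp
  also have "{x \<in> ?D. ?Q x} = {(a, b) \<in> E. a \<in> V \<and> b \<in> V \<and> a \<noteq> b \<and> mY (\<sigma> a) (\<sigma> b) = 1}"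
    by auto
  finally show ?thesis .
qed

context
  fixes n p q :: nat and E :: "(nat \<times> nat) set"
  assumes n2: "2 \<le> n" and E: "E \<subseteq> {1..n} \<times> {1..n}" and irrefl: "\<forall>v. (v, v) \<notin> E"
    and p: "p \<in> {1..n}" and q: "q \<in> {1..n}" and pq: "(p, q) \<in> E" and qp: "(q, p) \<notin> E"
    and sink: "sink_equivalent {1..n} E {p, q}"
begin

private lemma p_ne_q: "p \<noteq> q"
  using pq irrefl by auto

private lemma sink_iff: "b \<in> {1..n} \<Longrightarrow> b \<noteq> p \<Longrightarrow> b \<noteq> q \<Longrightarrow> (q, b) \<in> E \<longleftrightarrow> (p, b) \<in> E"
  using sink by (auto simp: sink_equivalent_def)

context
  fixes \<sigma> :: "nat \<Rightarrow> nat"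
  assumes \<sigma>: "bij_betw \<sigma> {1..n} {1..n}" and \<sigma>q: "\<sigma> q = n" and \<sigma>p: "\<sigma> p = n - 1"
begin

private lemma \<sigma>_in: "x \<in> {1..n} \<Longrightarrow> \<sigma> x \<in> {1..n}"
  using \<sigma> by (auto simp: bij_betw_def)

private lemma \<sigma>_eq_iff: "x \<in> {1..n} \<Longrightarrow> y \<in> {1..n} \<Longrightarrow> \<sigma> x = \<sigma> y \<longleftrightarrow> x = y"
  using \<sigma> by (auto simp: bij_betw_def dest: inj_onD)

lemma covered_edges_cycle_eq:
  defines "V' \<equiv> {1..n} - {q}"
  defines "S \<equiv> {b \<in> V'. \<sigma> b = 1 \<and> (p, b) \<in> E}"
    and "C \<equiv> {(a, b) \<in> E. a \<in> V' \<and> b \<in> V' \<and> \<sigma> b = Suc (\<sigma> a)}"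
  shows "{(a, b) \<in> E. a \<in> {1..n} \<and> b \<in> {1..n} \<and> a \<noteq> b \<and> cycle_mult n (\<sigma> a) (\<sigma> b) = 1}
    = insert (p, q) (Pair q ` S \<union> C)" (is "?A = _")
proof (intro equalityI subsetI)
  fix x assume "x \<in> ?A"
  then obtain a b where x: "x = (a, b)" and ab: "(a, b) \<in> E" "a \<noteq> b"
    and a: "a \<in> {1..n}" and b: "b \<in> {1..n}" and "cycle_mult n (\<sigma> a) (\<sigma> b) = 1"
    by blast
  then have succ: "\<sigma> b = cycle_succ n (\<sigma> a)" by (simp only: cycle_mult_eq_1_iff)
  show "x \<in> insert (p, q) (Pair q ` S \<union> C)"
  proof (cases "a = q")
    case True
    then have "\<sigma> b = 1" using succ \<sigma>q by (simp add: cycle_succ_def)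
    moreover have "b \<noteq> p" using ab qp True by auto
    ultimately have "b \<in> S" using ab b True sink_iff by (auto simp: S_def V'_def)
    then show ?thesis using x True by blast
  next
    case False
    then have "\<sigma> a \<noteq> n" using \<sigma>q \<sigma>_eq_iff a q by metis
    then have succ': "\<sigma> b = Suc (\<sigma> a)" using succ by (simp add: cycle_succ_def)
    show ?thesis
    proof (cases "b = q")
      case True
      then have "a = p" using succ' \<sigma>q \<sigma>p \<sigma>_eq_iff a p by (metis diff_Suc_1)
      then show ?thesis using x True by blast
    next
      case False
      then have "(a, b) \<in> C" using \<open>a \<noteq> q\<close> ab a b succ' by (simp add: C_def V'_def)
      then show ?thesis using x by blast
    qed
  qed
next
  fix x assume "x \<in> insert (p, q) (Pair q ` S \<union> C)"
  then consider "x = (p, q)" | b where "x = (q, b)" "b \<in> S" | "x \<in> C" by blast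
  then show "x \<in> ?A"
  proof cases
    case 1
    then show ?thesis using pq p q p_ne_q \<sigma>p \<sigma>q n2 by (auto simp: cycle_mult_def)
  next
    case (2 b)
    then have "b \<noteq> p" "b \<noteq> q" "b \<in> {1..n}" "\<sigma> b = 1" "(p, b) \<in> E"
      using irrefl by (auto simp: S_def V'_def)
    then show ?thesis using 2 sink_iff q \<sigma>q n2 by (auto simp: cycle_mult_def)
  next
    case 3
    then obtain a b where x: "x = (a, b)" and "(a, b) \<in> E" "a \<in> {1..n}" "b \<in> {1..n}"
      and "\<sigma> b = Suc (\<sigma> a)" by (auto simp: C_def V'_def)
    moreover have "\<sigma> a \<in> {1..n}" "\<sigma> b \<in> {1..n}" using calculation \<sigma>_in by blast+
    ultimately show ?thesis using n2 by (auto simp: cycle_mult_def)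
  qed
qed

lemma covered_edges_delete_eq:
  defines "V' \<equiv> {1..n} - {q}"
  defines "S \<equiv> {b \<in> V'. \<sigma> b = 1 \<and> (p, b) \<in> E}"
    and "C \<equiv> {(a, b) \<in> E. a \<in> V' \<and> b \<in> V' \<and> \<sigma> b = Suc (\<sigma> a)}"
  shows "{(a, b) \<in> E \<inter> V' \<times> V'. a \<in> V' \<and> b \<in> V' \<and> a \<noteq> b \<and> cycle_mult (n - 1) (\<sigma> a) (\<sigma> b) = 1}
    = Pair p ` S \<union> C" (is "?B = _")
proof (intro equalityI subsetI)
  fix x assume "x \<in> ?B"
  then obtain a b where x: "x = (a, b)" and ab: "(a, b) \<in> E" "a \<in> V'" "b \<in> V'"
    and "cycle_mult (n - 1) (\<sigma> a) (\<sigma> b) = 1"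
    by blast
  then have succ: "\<sigma> b = cycle_succ (n - 1) (\<sigma> a)" by (simp only: cycle_mult_eq_1_iff)
  show "x \<in> Pair p ` S \<union> C"
  proof (cases "a = p")
    case True
    then have "b \<in> S" using succ \<sigma>p ab by (simp add: cycle_succ_def S_def)
    then show ?thesis using x True by blast
  next
    case False
    then have "\<sigma> a \<noteq> n - 1" using \<sigma>p \<sigma>_eq_iff ab(2) p by (metis DiffD1 V'_def)
    then have "(a, b) \<in> C" using succ ab by (simp add: cycle_succ_def C_def)
    then show ?thesis using x by blast
  qed
next
  have \<sigma>_ne_last: "\<sigma> x \<in> {1..n} \<and> \<sigma> x \<noteq> n" if "x \<in> V'" for x
    using that \<sigma>_in \<sigma>_eq_iff[OF _ q] \<sigma>q by (auto simp: V'_def)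
  have pV': "p \<in> V'" using p p_ne_q by (simp add: V'_def)
  fix x assume "x \<in> Pair p ` S \<union> C"
  then consider b where "x = (p, b)" "b \<in> S" | "x \<in> C" by blast
  then show "x \<in> ?B"
  proof cases
    case (1 b)
    then have "b \<in> V'" "b \<noteq> p" "\<sigma> b = 1" "(p, b) \<in> E"
      using irrefl by (auto simp: S_def)
    moreover have "\<sigma> b \<noteq> \<sigma> p" using calculation \<sigma>_eq_iff p by (auto simp: V'_def)
    ultimately show ?thesis using 1 pV' \<sigma>p n2 by (auto simp: cycle_mult_def)
  next
    case 2
    then obtain a b where x: "x = (a, b)" and "(a, b) \<in> E" "a \<in> V'" "b \<in> V'"
      and "\<sigma> b = Suc (\<sigma> a)" by (auto simp: C_def)
    moreover have "\<sigma> a \<in> {1..n}" "\<sigma> b \<in> {1..n}" "\<sigma> b \<noteq> n"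
      using calculation \<sigma>_ne_last by blast+
    ultimately show ?thesis by (auto simp: cycle_mult_def)
  qed
qed

lemma outdeg_eq_Suc_outdeg_delete:
  defines "V' \<equiv> {1..n} - {q}"
  shows "outdeg {1..n} (graph_mult E) (cycle_mult n) \<sigma> =
    Suc (outdeg V' (graph_mult (E \<inter> V' \<times> V')) (cycle_mult (n - 1)) (restrict \<sigma> V'))"
proof -
  define S where "S = {b \<in> V'. \<sigma> b = 1 \<and> (p, b) \<in> E}"
  define C where "C = {(a, b) \<in> E. a \<in> V' \<and> b \<in> V' \<and> \<sigma> b = Suc (\<sigma> a)}"
  have fin: "finite S" "finite C"
    using finite_subset[OF E] by (auto simp: S_def V'_def C_def intro: finite_subset)
  have disj: "(p, q) \<notin> Pair q ` S \<union> C" "Pair q ` S \<inter> C = {}" "Pair p ` S \<inter> C = {}"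
    using p_ne_q \<sigma>_eq_iff[OF _ q] \<sigma>q \<sigma>p n2 by (auto simp: S_def C_def V'_def)
  have "outdeg {1..n} (graph_mult E) (cycle_mult n) \<sigma> =
      card {(a, b) \<in> E. a \<in> {1..n} \<and> b \<in> {1..n} \<and> a \<noteq> b \<and> cycle_mult n (\<sigma> a) (\<sigma> b) = 1}"
    by (rule outdeg_graph_mult_eq_card) (simp_all add: cycle_mult_def)
  also have "\<dots> = card (insert (p, q) (Pair q ` S \<union> C))"
    using covered_edges_cycle_eq unfolding S_def C_def V'_def by (rule arg_cong)
  also have "\<dots> = Suc (card S + card C)"
    using fin disj by (simp add: card_Un_disjoint card_image inj_on_def)
  also have "card S + card C = card (Pair p ` S \<union> C)"
    using fin disj by (simp add: card_Un_disjoint card_image inj_on_def)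
  also have "Pair p ` S \<union> C = {(a, b) \<in> E \<inter> V' \<times> V'. a \<in> V' \<and> b \<in> V' \<and> a \<noteq> b \<and>
      cycle_mult (n - 1) (\<sigma> a) (\<sigma> b) = 1}"
    using covered_edges_delete_eq unfolding S_def C_def V'_def by (rule sym)
  also have "\<dots> = {(a, b) \<in> E \<inter> V' \<times> V'. a \<in> V' \<and> b \<in> V' \<and> a \<noteq> b \<and>
      cycle_mult (n - 1) (restrict \<sigma> V' a) (restrict \<sigma> V' b) = 1}"
    by auto
  also have "card \<dots> = outdeg V' (graph_mult (E \<inter> V' \<times> V')) (cycle_mult (n - 1)) (restrict \<sigma> V')"
    by (rule outdeg_graph_mult_eq_card[symmetric]) (simp_all add: V'_def cycle_mult_def)
  finally show ?thesis .
qed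

end

lemma sum_outdeg_last_fibre:
  defines "V' \<equiv> {1..n} - {q}"
  shows "(\<Sum>\<sigma> \<in> {\<sigma> \<in> bijs {1..n} {1..n}. \<sigma> q = n \<and> \<sigma> p = n - 1}.
        monom (1::rat) (outdeg {1..n} (graph_mult E) (cycle_mult n) \<sigma>)) =
    monom 1 1 * (\<Sum>\<tau> \<in> {\<tau> \<in> bijs V' {1..n - 1}. \<tau> p = n - 1}.
        monom 1 (outdeg V' (graph_mult (E \<inter> V' \<times> V')) (cycle_mult (n - 1)) \<tau>))"
    (is "sum ?F ?S = monom 1 1 * sum ?G ?T")
proof -
  have "{1..n} - {n} = {1..n - 1}" by auto
  then have "bij_betw (\<lambda>\<sigma>. restrict \<sigma> V') {\<sigma> \<in> bijs {1..n} {1..n}. \<sigma> q = n} (bijs V' {1..n - 1})"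
    using bij_betw_restrict_bijs[of q "{1..n}" n "{1..n}"] n2 q by (simp add: V'_def)
  then have "bij_betw (\<lambda>\<sigma>. restrict \<sigma> V') {\<sigma> \<in> {\<sigma> \<in> bijs {1..n} {1..n}. \<sigma> q = n}. \<sigma> p = n - 1} ?T"
    by (rule bij_betw_Collect) (use p p_ne_q in \<open>simp add: V'_def\<close>)
  then have reindex: "sum (\<lambda>\<sigma>. ?G (restrict \<sigma> V')) ?S = sum ?G ?T"
    unfolding mem_Collect_eq conj_assoc by (rule sum.reindex_bij_betw)
  have "monom 1 1 * sum (\<lambda>\<sigma>. ?G (restrict \<sigma> V')) ?S = sum ?F ?S"
    unfolding sum_distrib_left
  proof (rule sum.cong)
    fix \<sigma> assume "\<sigma> \<in> ?S"
    then have "bij_betw \<sigma> {1..n} {1..n}" "\<sigma> q = n" "\<sigma> p = n - 1" by (simp_all add: bijs_def)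
    from outdeg_eq_Suc_outdeg_delete[OF this]
    show "monom 1 1 * ?G (restrict \<sigma> V') = ?F \<sigma>" by (simp add: mult_monom V'_def)
  qed simp
  then show ?thesis unfolding reindex by (rule sym)
qed

end

theorem mainTheorem15:
  fixes n p q :: nat and E :: "(nat \<times> nat) set"
  assumes "2 \<le> n"
    and "E \<subseteq> {1..n} \<times> {1..n}"
    and "\<forall>v. (v, v) \<notin> E"
    and "p \<in> {1..n}" and "q \<in> {1..n}"
    and "(p, q) \<in> E"
    and "(q, p) \<notin> E"
    and "sink_equivalent {1..n} E {p, q}"
  shows "ODP_edge {1..n} {1..n} (graph_mult E) (cycle_mult n) p q =
    smult (of_nat n / of_nat (n - 1))
      (monom 1 1 * ODP ({1..n} - {q}) {1..n - 1}
         (graph_mult (E \<inter> (({1..n} - {q}) \<times> ({1..n} - {q})))) (cycle_mult (n - 1)))"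
proof -
  let ?V' = "{1..n} - {q}"
  let ?G = "\<lambda>\<tau>. monom (1::rat) (outdeg ?V' (graph_mult (E \<inter> ?V' \<times> ?V')) (cycle_mult (n - 1)) \<tau>)"
  let ?T = "{\<tau> \<in> bijs ?V' {1..n - 1}. \<tau> p = n - 1}"
  have "p \<in> ?V'" using assms(3,4,6) by auto
  have "{\<sigma> \<in> bijs {1..n} {1..n}. 1 \<le> cycle_mult n (\<sigma> p) (\<sigma> q) \<and> \<sigma> q = n}
      = {\<sigma> \<in> bijs {1..n} {1..n}. \<sigma> q = n \<and> \<sigma> p = n - 1}"
    using cycle_mult_into_last[OF assms(1)] bijs_into[OF _ assms(4)] by blast
  then have edge: "ODP_edge {1..n} {1..n} (graph_mult E) (cycle_mult n) p q = of_nat n * (monom 1 1 * sum ?G ?T)"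
    using ODP_edge_eq_mult_fibre_sum[of "{1..n}" p q n] sum_outdeg_last_fibre[OF assms] assms(4,5)
    by simp
  have ODP': "ODP ?V' {1..n - 1} (graph_mult (E \<inter> ?V' \<times> ?V')) (cycle_mult (n - 1)) = of_nat (n - 1) * sum ?G ?T"
    using ODP_eq_mult_fibre_sum[OF _ \<open>p \<in> ?V'\<close>] by simp
  have "of_nat n / of_nat (n - 1) * of_nat (n - 1) = (of_nat n :: rat)" using assms(1) by simp
  then show ?thesis unfolding edge ODP' by (simp add: of_nat_mult_conv_smult)
qed

end
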